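(* The Lie algebras $\mathfrak h(1)$, $\mathfrak g_{4,1}$, $\mathfrak g_{5,2}$, $\mathfrak g_{6,4}$, $\mathfrak g_{6,5}$ are admissible.
   Context: Lie algebras are given by a basis and brackets; brackets of basis vectors not listed vanish. $\mathfrak h(1)=\{[X_1,X_2]=Y\}$, $\mathfrak g_{4,1}=\{[X_1,Z]=Y,[X_1,X_2]=Z\}$, $\mathfrak g_{5,2}=\{[X_1,X_2]=Y,[X_1,X_3]=Z\}$, $\mathfrak g_{6,4}=\{[X_1,X_2]=Y,[X_1,X_3]=Z,[X_3,X_4]=Y\}$, $\mathfrak g_{6,5}=\{[X_1,X_2]=Y,[X_1,X_3]=Z,[X_2,X_4]=Z,[X_3,X_4]=-Y\}$ (real Lie algebras). For a Lie algebra $\mathfrak l$: $\mathfrak l^1=\mathfrak l$, $\mathfrak l^{k+1}=[\mathfrak l,\mathfrak l^k]$, $\mathfrak z(\mathfrak l)$ the centre. An orthogonal $\mathfrak l$-module $(\rho,\mathfrak a)$ is a finite-dimensional real vector space with a nondegenerate symmetric bilinear form $\langle\cdot,\cdot\rangle_{\mathfrak a}$ and a representation by skew-adjoint maps. $C^p(\mathfrak l,\mathfrak a)$: alternating $p$-linear maps with Chevalley–Eilenberg differential $d$; $C^p(\mathfrak l)=C^p(\mathfrak l,\mathbb R)$. $\langle\alpha\wedge\beta\rangle\in C^{p+q}(\mathfrak l)$ is the wedge product followed by contraction with $\langle\cdot,\cdot\rangle_{\mathfrak a}$. $\mathcal Z^2_Q(\mathfrak l,\mathfrak a)=\{(\alpha,\gamma)\in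 C^2(\mathfrak l,\mathfrak a)\oplus C^3(\mathfrak l): d\alpha=0, d\gamma=\frac12\langle\alpha\wedge\alpha\rangle\}$; the group $C^1(\mathfrak l,\mathfrak a)\oplus C^2(\mathfrak l)$ with $(\tau_1,\sigma_1)*(\tau_2,\sigma_2)=(\tau_1+\tau_2,\sigma_1+\sigma_2+\frac12\langle\tau_1\wedge\tau_2\rangle)$ acts by $(\alpha,\gamma)(\tau,\sigma)=(\alpha+d\tau,\gamma+d\sigma+\langle(\alpha+\frac12d\tau)\wedge\tau\rangle)$; the orbit set is $\mathcal H^2_Q(\mathfrak l,\mathfrak a)$. Admissibility (for nilpotent $\mathfrak l$ and semisimple orthogonal $(\rho,\mathfrak a)$): let $\mathfrak l^{m+2}=0$, $\mathfrak l_{(0)}=\mathfrak z(\mathfrak l)\cap\ker\rho$, $\mathfrak l_{(k)}=\mathfrak z(\mathfrak l)\cap\mathfrak l^{k+1}$ for $k\ge1$; represent the class by $(\alpha,\gamma)$ with $\alpha(\mathfrak l,\mathfrak l)\subset\mathfrak a^{\mathfrak l}$. It is admissible iff for $0\le k\le m$: $(A_k)$ if $L_0\in\mathfrak l_{(k)}$ and there are $A_0\in\mathfrak a$, $Z_0\in(\mathfrak l^{k+1})^*$ with $\alpha(L,L_0)=0$ and $\gamma(L,L_0,\cdot)=-\langle A_0,\alpha(L,\cdot)\rangle_{\mathfrak a}+\langle Z_0,[L,\cdot]\rangle$ on $\mathfrak l^{k+1}$ for all $L\in\mathfrak l$, then $L_0=0$; $(B_k)$ $\alpha(\ker(\mathfrak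 l\otimes\mathfrak l^{k+1}\xrightarrow{[\cdot,\cdot]}\mathfrak l))\subset\mathfrak a$ is nondegenerate. $\mathfrak l$ is admissible if for some semisimple orthogonal module $\mathfrak a$ an admissible class in $\mathcal H^2_Q(\mathfrak l,\mathfrak a)$ exists. *)

theory Defs
  imports "HOL-Analysis.Analysis" "HOL-Library.Function_Algebras"
begin

text \<open>Used only as an ambient space in which every finite-dimensional real
vector space (the module a) can be realised as a subspace.\<close>

instantiation "fun" :: (type, real_vector) real_vector
begin
definition scaleR_fun :: "real \<Rightarrow> ('a \<Rightarrow> 'b) \<Rightarrow> 'a \<Rightarrow> 'b"
  where "scaleR_fun c f = (\<lambda>x. c *\<^sub>R f x)"
instance
  by standard (simp_all add: scaleR_fun_def fun_eq_iff plus_fun_def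
      scaleR_add_right scaleR_add_left)
end

text \<open>The Lie algebra l is the whole (finite-dimensional) type 'v with bracket br.\<close>

text \<open>Lower central series: lcs br (Suc 0) = l, lcs br (Suc (Suc k)) = [l, l^(k+1)].\<close>
fun lcs :: "('v::real_vector \<Rightarrow> 'v \<Rightarrow> 'v) \<Rightarrow> nat \<Rightarrow> 'v set" where
  "lcs br 0 = UNIV"
| "lcs br (Suc 0) = UNIV"
| "lcs br (Suc (Suc k)) = span {br x y | x y. y \<in> lcs br (Suc k)}"

definition centre :: "('v \<Rightarrow> 'v \<Rightarrow> 'v::real_vector) \<Rightarrow> 'v set" where
  "centre br = {z. \<forall>x. br x z = 0}"

definition bilinear_map :: "('v::real_vector \<Rightarrow> 'v \<Rightarrow> 'w::real_vector) \<Rightarrow> bool" where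
  "bilinear_map f \<longleftrightarrow> (\<forall>x. linear (f x)) \<and> (\<forall>y. linear (\<lambda>x. f x y))"

definition trilinear_map :: "('v::real_vector \<Rightarrow> 'v \<Rightarrow> 'v \<Rightarrow> 'w::real_vector) \<Rightarrow> bool" where
  "trilinear_map f \<longleftrightarrow> (\<forall>x y. linear (f x y)) \<and> (\<forall>x z. linear (\<lambda>y. f x y z))
      \<and> (\<forall>y z. linear (\<lambda>x. f x y z))"

definition linear_on :: "'w::real_vector set \<Rightarrow> ('w \<Rightarrow> 'u::real_vector) \<Rightarrow> bool" where
  "linear_on S f \<longleftrightarrow> (\<forall>u\<in>S. \<forall>v\<in>S. f (u + v) = f u + f v) \<and> (\<forall>c. \<forall>u\<in>S. f (c *\<^sub>R u) = c *\<^sub>R f u)"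

definition fin_dim_subspace :: "'w::real_vector set \<Rightarrow> bool" where
  "fin_dim_subspace A \<longleftrightarrow> subspace A \<and> (\<exists>S. finite S \<and> A = span S)"

definition is_rep :: "('v::real_vector \<Rightarrow> 'v \<Rightarrow> 'v) \<Rightarrow> 'w::real_vector set \<Rightarrow> ('v \<Rightarrow> 'w \<Rightarrow> 'w) \<Rightarrow> bool" where
  "is_rep br A \<rho> \<longleftrightarrow>
     (\<forall>x. \<forall>u\<in>A. \<rho> x u \<in> A)
   \<and> (\<forall>x. linear_on A (\<rho> x))
   \<and> (\<forall>u\<in>A. linear (\<lambda>x. \<rho> x u))
   \<and> (\<forall>x y. \<forall>u\<in>A. \<rho> (br x y) u = \<rho> x (\<rho> y u) - \<rho> y (\<rho> x u))"

definition nondeg_sym_form :: "'w::real_vector set \<Rightarrow> ('w \<Rightarrow> 'w \<Rightarrow> real) \<Rightarrow> bool" where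
  "nondeg_sym_form A B \<longleftrightarrow>
     (\<forall>u\<in>A. linear_on A (B u))
   \<and> (\<forall>u\<in>A. \<forall>v\<in>A. B u v = B v u)
   \<and> (\<forall>u\<in>A. (\<forall>v\<in>A. B u v = 0) \<longrightarrow> u = 0)"

definition orthogonal_module ::
  "('v::real_vector \<Rightarrow> 'v \<Rightarrow> 'v) \<Rightarrow> 'w::real_vector set \<Rightarrow> ('v \<Rightarrow> 'w \<Rightarrow> 'w) \<Rightarrow> ('w \<Rightarrow> 'w \<Rightarrow> real) \<Rightarrow> bool" where
  "orthogonal_module br A \<rho> B \<longleftrightarrow>
     fin_dim_subspace A \<and> is_rep br A \<rho> \<and> nondeg_sym_form A B
   \<and> (\<forall>x. \<forall>u\<in>A. \<forall>v\<in>A. B (\<rho> x u) v = - B u (\<rho> x v))"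

definition invariant_subspace :: "'w::real_vector set \<Rightarrow> ('v \<Rightarrow> 'w \<Rightarrow> 'w) \<Rightarrow> 'w set \<Rightarrow> bool" where
  "invariant_subspace A \<rho> U \<longleftrightarrow> subspace U \<and> U \<subseteq> A \<and> (\<forall>x. \<forall>u\<in>U. \<rho> x u \<in> U)"

definition semisimple_rep :: "'w::real_vector set \<Rightarrow> ('v \<Rightarrow> 'w \<Rightarrow> 'w) \<Rightarrow> bool" where
  "semisimple_rep A \<rho> \<longleftrightarrow>
     (\<forall>U. invariant_subspace A \<rho> U \<longrightarrow>
        (\<exists>W. invariant_subspace A \<rho> W \<and> U \<inter> W = {0} \<and> {u + w | u w. u \<in> U \<and> w \<in> W} = A))"

definition invariants :: "'w set \<Rightarrow> ('v \<Rightarrow> 'w \<Rightarrow> 'w::real_vector) \<Rightarrow> 'w set" where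
  "invariants A \<rho> = {a \<in> A. \<forall>x. \<rho> x a = 0}"

definition ker_rep :: "'w set \<Rightarrow> ('v \<Rightarrow> 'w \<Rightarrow> 'w::real_vector) \<Rightarrow> 'v set" where
  "ker_rep A \<rho> = {x. \<forall>u\<in>A. \<rho> x u = 0}"

definition C1 :: "'w set \<Rightarrow> ('v::real_vector \<Rightarrow> 'w::real_vector) set" where
  "C1 A = {\<tau>. linear \<tau> \<and> (\<forall>x. \<tau> x \<in> A)}"

definition C2 :: "'w set \<Rightarrow> ('v::real_vector \<Rightarrow> 'v \<Rightarrow> 'w::real_vector) set" where
  "C2 A = {\<alpha>. bilinear_map \<alpha> \<and> (\<forall>x. \<alpha> x x = 0) \<and> (\<forall>x y. \<alpha> x y \<in> A)}"

definition C2s :: "('v::real_vector \<Rightarrow> 'v \<Rightarrow> real) set" where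
  "C2s = {\<sigma>. bilinear_map \<sigma> \<and> (\<forall>x. \<sigma> x x = 0)}"

definition C3s :: "('v::real_vector \<Rightarrow> 'v \<Rightarrow> 'v \<Rightarrow> real) set" where
  "C3s = {\<gamma>. trilinear_map \<gamma> \<and> (\<forall>x y. \<gamma> x x y = 0 \<and> \<gamma> x y y = 0 \<and> \<gamma> x y x = 0)}"

definition d1 :: "('v \<Rightarrow> 'v \<Rightarrow> 'v) \<Rightarrow> ('v \<Rightarrow> 'w \<Rightarrow> 'w::real_vector) \<Rightarrow> ('v \<Rightarrow> 'w) \<Rightarrow> 'v \<Rightarrow> 'v \<Rightarrow> 'w" where
  "d1 br \<rho> \<tau> x y = \<rho> x (\<tau> y) - \<rho> y (\<tau> x) - \<tau> (br x y)"

definition d2 :: "('v \<Rightarrow> 'v \<Rightarrow> 'v) \<Rightarrow> ('v \<Rightarrow> 'w \<Rightarrow> 'w::real_vector) \<Rightarrow> ('v \<Rightarrow> 'v \<Rightarrow> 'w) \<Rightarrow> 'v \<Rightarrow> 'v \<Rightarrow> 'v \<Rightarrow> 'w" where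
  "d2 br \<rho> \<alpha> x y z = \<rho> x (\<alpha> y z) - \<rho> y (\<alpha> x z) + \<rho> z (\<alpha> x y)
      - \<alpha> (br x y) z + \<alpha> (br x z) y - \<alpha> (br y z) x"

definition d2s :: "('v \<Rightarrow> 'v \<Rightarrow> 'v) \<Rightarrow> ('v \<Rightarrow> 'v \<Rightarrow> real) \<Rightarrow> 'v \<Rightarrow> 'v \<Rightarrow> 'v \<Rightarrow> real" where
  "d2s br \<sigma> x y z = - \<sigma> (br x y) z + \<sigma> (br x z) y - \<sigma> (br y z) x"

definition d3s :: "('v \<Rightarrow> 'v \<Rightarrow> 'v) \<Rightarrow> ('v \<Rightarrow> 'v \<Rightarrow> 'v \<Rightarrow> real) \<Rightarrow> 'v \<Rightarrow> 'v \<Rightarrow> 'v \<Rightarrow> 'v \<Rightarrow> real" where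
  "d3s br \<gamma> w x y z = - \<gamma> (br w x) y z + \<gamma> (br w y) x z - \<gamma> (br w z) x y
      - \<gamma> (br x y) w z + \<gamma> (br x z) w y - \<gamma> (br y z) w x"

text \<open>Contracted wedge products (shuffle convention).\<close>
definition wedge11 :: "('w \<Rightarrow> 'w \<Rightarrow> real) \<Rightarrow> ('v \<Rightarrow> 'w) \<Rightarrow> ('v \<Rightarrow> 'w) \<Rightarrow> 'v \<Rightarrow> 'v \<Rightarrow> real" where
  "wedge11 B \<tau>1 \<tau>2 x y = B (\<tau>1 x) (\<tau>2 y) - B (\<tau>1 y) (\<tau>2 x)"

definition wedge21 :: "('w \<Rightarrow> 'w \<Rightarrow> real) \<Rightarrow> ('v \<Rightarrow> 'v \<Rightarrow> 'w) \<Rightarrow> ('v \<Rightarrow> 'w) \<Rightarrow> 'v \<Rightarrow> 'v \<Rightarrow> 'v \<Rightarrow> real" where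
  "wedge21 B \<beta> \<tau> x y z = B (\<beta> x y) (\<tau> z) - B (\<beta> x z) (\<tau> y) + B (\<beta> y z) (\<tau> x)"

definition wedge22 :: "('w \<Rightarrow> 'w \<Rightarrow> real) \<Rightarrow> ('v \<Rightarrow> 'v \<Rightarrow> 'w) \<Rightarrow> ('v \<Rightarrow> 'v \<Rightarrow> 'w) \<Rightarrow> 'v \<Rightarrow> 'v \<Rightarrow> 'v \<Rightarrow> 'v \<Rightarrow> real" where
  "wedge22 B \<alpha> \<beta> w x y z =
      B (\<alpha> w x) (\<beta> y z) - B (\<alpha> w y) (\<beta> x z) + B (\<alpha> w z) (\<beta> x y)
    + B (\<alpha> x y) (\<beta> w z) - B (\<alpha> x z) (\<beta> w y) + B (\<alpha> y z) (\<beta> w x)"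

definition Z2Q :: "('v::real_vector \<Rightarrow> 'v \<Rightarrow> 'v) \<Rightarrow> 'w::real_vector set \<Rightarrow> ('v \<Rightarrow> 'w \<Rightarrow> 'w) \<Rightarrow> ('w \<Rightarrow> 'w \<Rightarrow> real)
     \<Rightarrow> (('v \<Rightarrow> 'v \<Rightarrow> 'w) \<times> ('v \<Rightarrow> 'v \<Rightarrow> 'v \<Rightarrow> real)) set" where
  "Z2Q br A \<rho> B = {(\<alpha>, \<gamma>). \<alpha> \<in> C2 A \<and> \<gamma> \<in> C3s
      \<and> (\<forall>x y z. d2 br \<rho> \<alpha> x y z = 0)
      \<and> (\<forall>w x y z. d3s br \<gamma> w x y z = (1/2) * wedge22 B \<alpha> \<alpha> w x y z)}"

definition qact :: "('v \<Rightarrow> 'v \<Rightarrow> 'v) \<Rightarrow> ('v \<Rightarrow> 'w \<Rightarrow> 'w::real_vector) \<Rightarrow> ('w \<Rightarrow> 'w \<Rightarrow> real)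
     \<Rightarrow> ('v \<Rightarrow> 'v \<Rightarrow> 'w) \<times> ('v \<Rightarrow> 'v \<Rightarrow> 'v \<Rightarrow> real) \<Rightarrow> ('v \<Rightarrow> 'w) \<times> ('v \<Rightarrow> 'v \<Rightarrow> real)
     \<Rightarrow> ('v \<Rightarrow> 'v \<Rightarrow> 'w) \<times> ('v \<Rightarrow> 'v \<Rightarrow> 'v \<Rightarrow> real)" where
  "qact br \<rho> B p g =
     (case p of (\<alpha>, \<gamma>) \<Rightarrow> case g of (\<tau>, \<sigma>) \<Rightarrow>
       (\<lambda>x y. \<alpha> x y + d1 br \<rho> \<tau> x y,
        \<lambda>x y z. \<gamma> x y z + d2s br \<sigma> x y z
           + wedge21 B (\<lambda>u v. \<alpha> u v + (1/2) *\<^sub>R d1 br \<rho> \<tau> u v) \<tau> x y z))"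

definition H2Q :: "('v::real_vector \<Rightarrow> 'v \<Rightarrow> 'v) \<Rightarrow> 'w::real_vector set \<Rightarrow> ('v \<Rightarrow> 'w \<Rightarrow> 'w) \<Rightarrow> ('w \<Rightarrow> 'w \<Rightarrow> real)
     \<Rightarrow> (('v \<Rightarrow> 'v \<Rightarrow> 'w) \<times> ('v \<Rightarrow> 'v \<Rightarrow> 'v \<Rightarrow> real)) set set" where
  "H2Q br A \<rho> B = {qact br \<rho> B p ` (C1 A \<times> C2s) | p. p \<in> Z2Q br A \<rho> B}"

definition lk :: "('v::real_vector \<Rightarrow> 'v \<Rightarrow> 'v) \<Rightarrow> 'w::real_vector set \<Rightarrow> ('v \<Rightarrow> 'w \<Rightarrow> 'w) \<Rightarrow> nat \<Rightarrow> 'v set" where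
  "lk br A \<rho> k = (if k = 0 then centre br \<inter> ker_rep A \<rho> else centre br \<inter> lcs br (Suc k))"

definition cond_A :: "('v::real_vector \<Rightarrow> 'v \<Rightarrow> 'v) \<Rightarrow> 'w::real_vector set \<Rightarrow> ('v \<Rightarrow> 'w \<Rightarrow> 'w) \<Rightarrow> ('w \<Rightarrow> 'w \<Rightarrow> real)
     \<Rightarrow> ('v \<Rightarrow> 'v \<Rightarrow> 'w) \<Rightarrow> ('v \<Rightarrow> 'v \<Rightarrow> 'v \<Rightarrow> real) \<Rightarrow> nat \<Rightarrow> bool" where
  "cond_A br A \<rho> B \<alpha> \<gamma> k \<longleftrightarrow>
     (\<forall>L0 \<in> lk br A \<rho> k.
        (\<exists>A0 \<in> A. \<exists>Z0 :: 'v \<Rightarrow> real. linear_on (lcs br (Suc k)) Z0 \<and>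
           (\<forall>L. \<alpha> L L0 = 0 \<and>
              (\<forall>X \<in> lcs br (Suc k). \<gamma> L L0 X = - B A0 (\<alpha> L X) + Z0 (br L X))))
        \<longrightarrow> L0 = 0)"

text \<open>Image under alpha of the kernel of l (x) l^(k+1) -> l, written out via finite sums of
  elementary tensors.\<close>
definition alpha_ker_image :: "('v::real_vector \<Rightarrow> 'v \<Rightarrow> 'v) \<Rightarrow> ('v \<Rightarrow> 'v \<Rightarrow> 'w::real_vector) \<Rightarrow> nat \<Rightarrow> 'w set" where
  "alpha_ker_image br \<alpha> k =
     {(\<Sum>i<N. \<alpha> (x i) (y i)) | (N::nat) x y.
        (\<forall>i<N. y i \<in> lcs br (Suc k)) \<and> (\<Sum>i<N. br (x i) (y i)) = 0}"

definition nondegenerate_sub :: "('w \<Rightarrow> 'w \<Rightarrow> real) \<Rightarrow> 'w::real_vector set \<Rightarrow> bool" where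
  "nondegenerate_sub B S \<longleftrightarrow> (\<forall>u\<in>S. (\<forall>v\<in>S. B u v = 0) \<longrightarrow> u = 0)"

definition cond_B :: "('v::real_vector \<Rightarrow> 'v \<Rightarrow> 'v) \<Rightarrow> ('w \<Rightarrow> 'w \<Rightarrow> real) \<Rightarrow> ('v \<Rightarrow> 'v \<Rightarrow> 'w::real_vector) \<Rightarrow> nat \<Rightarrow> bool" where
  "cond_B br B \<alpha> k \<longleftrightarrow> nondegenerate_sub B (alpha_ker_image br \<alpha> k)"

definition nil_m :: "('v::real_vector \<Rightarrow> 'v \<Rightarrow> 'v) \<Rightarrow> nat" where
  "nil_m br = (LEAST m. lcs br (m + 2) = {0})"

definition admissible_class :: "('v::real_vector \<Rightarrow> 'v \<Rightarrow> 'v) \<Rightarrow> 'w::real_vector set \<Rightarrow> ('v \<Rightarrow> 'w \<Rightarrow> 'w) \<Rightarrow> ('w \<Rightarrow> 'w \<Rightarrow> real)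
     \<Rightarrow> (('v \<Rightarrow> 'v \<Rightarrow> 'w) \<times> ('v \<Rightarrow> 'v \<Rightarrow> 'v \<Rightarrow> real)) set \<Rightarrow> bool" where
  "admissible_class br A \<rho> B c \<longleftrightarrow>
     (\<exists>\<alpha> \<gamma>. (\<alpha>, \<gamma>) \<in> c \<and> (\<forall>x y. \<alpha> x y \<in> invariants A \<rho>)
        \<and> (\<forall>k \<le> nil_m br. cond_A br A \<rho> B \<alpha> \<gamma> k \<and> cond_B br B \<alpha> k))"

text \<open>Every finite-dimensional real vector space is isomorphic to a subspace of nat => real,
  so quantifying over modules realised there is no loss of generality.\<close>
definition admissible_lie :: "('v::real_vector \<Rightarrow> 'v \<Rightarrow> 'v) \<Rightarrow> bool" where
  "admissible_lie br \<longleftrightarrow>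
     (\<exists>(A :: (nat \<Rightarrow> real) set) \<rho> B.
        orthogonal_module br A \<rho> B \<and> semisimple_rep A \<rho>
      \<and> (\<exists>c \<in> H2Q br A \<rho> B. admissible_class br A \<rho> B c))"

text \<open>Bilinear extension of brackets of basis vectors e_i = axis i 1.\<close>
definition struct_br :: "('n::finite \<Rightarrow> 'n \<Rightarrow> real^'n) \<Rightarrow> real^'n \<Rightarrow> real^'n \<Rightarrow> real^'n" where
  "struct_br c u v = (\<Sum>i\<in>UNIV. \<Sum>j\<in>UNIV. (u $ i * v $ j) *\<^sub>R c i j)"

definition skew_entry :: "'n \<Rightarrow> 'n \<Rightarrow> real^'n \<Rightarrow> 'n \<Rightarrow> 'n \<Rightarrow> real^'n" where
  "skew_entry a b z i j = (if i = a \<and> j = b then z else if i = b \<and> j = a then - z else 0)"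

definition e :: "'n \<Rightarrow> real^'n::finite" where "e i = axis i 1"

text \<open>h(1): basis X1 = e 1, X2 = e 2, Y = e 3.\<close>
definition h1_br :: "real^3 \<Rightarrow> real^3 \<Rightarrow> real^3" where
  "h1_br = struct_br (skew_entry 1 2 (e 3))"

text \<open>g_{4,1}: basis X1 = e 1, X2 = e 2, Z = e 3, Y = e 4.\<close>
definition g41_br :: "real^4 \<Rightarrow> real^4 \<Rightarrow> real^4" where
  "g41_br = struct_br (\<lambda>i j. skew_entry 1 3 (e 4) i j + skew_entry 1 2 (e 3) i j)"

text \<open>g_{5,2}: basis X1 = e 1, X2 = e 2, X3 = e 3, Y = e 4, Z = e 5.\<close>
definition g52_br :: "real^5 \<Rightarrow> real^5 \<Rightarrow> real^5" where
  "g52_br = struct_br (\<lambda>i j. skew_entry 1 2 (e 4) i j + skew_entry 1 3 (e 5) i j)"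

text \<open>g_{6,4}: basis X1..X4 = e 1..e 4, Y = e 5, Z = e 6.\<close>
definition g64_br :: "real^6 \<Rightarrow> real^6 \<Rightarrow> real^6" where
  "g64_br = struct_br (\<lambda>i j. skew_entry 1 2 (e 5) i j + skew_entry 1 3 (e 6) i j
                           + skew_entry 3 4 (e 5) i j)"

text \<open>g_{6,5}: basis X1..X4 = e 1..e 4, Y = e 5, Z = e 6.\<close>
definition g65_br :: "real^6 \<Rightarrow> real^6 \<Rightarrow> real^6" where
  "g65_br = struct_br (\<lambda>i j. skew_entry 1 2 (e 5) i j + skew_entry 1 3 (e 6) i j
                           + skew_entry 2 4 (e 6) i j + skew_entry 3 4 (- e 5) i j)"

end

theory Submission
  imports Defs
begin

text \<open>
  All five algebras are handled with one module: the plane \<open>\<real>\<^sup>2\<close> with a form of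
  signature (1,1) and the trivial action, which is semisimple because every subspace of a
  vector space has a complement. With an orthonormal basis \<open>a\<^sub>1, a\<^sub>2\<close>
  (\<open>\<langle>a\<^sub>1,a\<^sub>1\<rangle> = 1 = -\<langle>a\<^sub>2,a\<^sub>2\<rangle>\<close>) the class is represented by \<open>\<alpha> = \<omega>\<^sub>1 a\<^sub>1 + \<omega>\<^sub>2 a\<^sub>2\<close> with
  closed scalar 2-forms \<open>\<omega>\<^sub>i\<close> and a 3-form \<open>\<gamma>\<close> with \<open>d\<gamma> = (\<omega>\<^sub>1\<and>\<omega>\<^sub>1 - \<omega>\<^sub>2\<and>\<omega>\<^sub>2)/2\<close>.

  For h(1), g_{4,1}, g_{5,2} and g_{6,4} one takes \<open>\<omega>\<^sub>2 = 0\<close>. Then \<open>\<alpha>\<close> takes values in the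
  definite line through \<open>a\<^sub>1\<close>, which gives every \<open>(B\<^sub>k)\<close>. For h(1) and g_{4,1},
  \<open>\<omega>\<^sub>1 = X\<^sub>1\<^sup>* \<and> Y\<^sup>*\<close> and \<open>\<gamma> = 0\<close>, and \<open>(A\<^sub>k)\<close> holds because no nonzero central element
  is \<open>\<omega>\<^sub>1\<close>-orthogonal to the whole algebra. For g_{5,2} and g_{6,4} the chosen \<open>\<omega>\<^sub>1\<close>
  (\<open>X\<^sub>3\<^sup>* \<and> Z\<^sup>*\<close>, resp. \<open>X\<^sub>1\<^sup>* \<and> Z\<^sup>* + X\<^sub>2\<^sup>* \<and> X\<^sub>3\<^sup>*\<close>) has the central vector \<open>Y\<close> in its
  radical, and \<open>Y\<close> is excluded instead by \<open>\<gamma> = X\<^sub>i\<^sup>* \<and> Y\<^sup>* \<and> Z\<^sup>*\<close> (\<open>i = 1\<close>, resp. \<open>3\<close>):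
  \<open>\<gamma>(X\<^sub>i, Y, Z) = 1\<close> with \<open>Z \<in> [l, l]\<close>, whereas \<open>(A\<^sub>k)\<close> would force it to vanish. For g_{6,5}
  both components are needed: \<open>\<omega>\<^sub>1 = Y\<^sup>* \<and> X\<^sub>4\<^sup>* + X\<^sub>1\<^sup>* \<and> Z\<^sup>*\<close> and
  \<open>\<omega>\<^sub>2 = X\<^sub>1\<^sup>* \<and> Y\<^sup>* + X\<^sub>4\<^sup>* \<and> Z\<^sup>*\<close> have equal squares, so \<open>\<gamma> = 0\<close>, and \<open>(B\<^sub>k)\<close> holds because
  \<open>\<alpha>(X\<^sub>1, Z) = a\<^sub>1\<close> and \<open>\<alpha>(X\<^sub>4, Z) = a\<^sub>2\<close>. The last three algebras are 2-step nilpotent, so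
  all conditions are void for \<open>k \<ge> 2\<close>.
\<close>

lemma subspace_complement_exists:
  fixes A U :: "'a::real_vector set"
  assumes A: "subspace A" and U: "subspace U" "U \<subseteq> A"
  obtains W where "subspace W" "W \<subseteq> A" "U \<inter> W = {0}" "{u + w | u w. u \<in> U \<and> w \<in> W} = A"
proof -
  obtain b where b: "b \<subseteq> U" "independent b" "U \<subseteq> span b"
    by (rule basis_exists)
  obtain c where c: "b \<subseteq> c" "c \<subseteq> A" "independent c" "A \<subseteq> span c"
    by (rule maximal_independent_subset_extend[of b A]) (use b U(2) in auto)
  have span_b: "span b = U"
    using b(3) span_minimal[OF b(1) U(1)] by (rule antisym[rotated])
  have span_c: "span c = A"
    using c(4) span_minimal[OF c(2) A] by (rule antisym[rotated])
  have "x = 0" if x: "x \<in> U" "x \<in> span (c - b)" for x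
  proof -
    have xb: "x \<in> span b" using x span_b by simp
    have xc: "x \<in> span c" using x U(2) span_c by blast
    text \<open>The coordinates of \<open>x\<close> in the basis \<open>c\<close> are supported both in \<open>b\<close> and in \<open>c - b\<close>.\<close>
    have "representation c x = representation b x"
      by (rule representation_extend[OF c(3) xb c(1)])
    moreover have "representation c x = representation (c - b) x"
      by (rule representation_extend[OF c(3) x(2)]) blast
    ultimately have "representation c x v = 0" for v
      using representation_ne_zero[of b x v] representation_ne_zero[of "c - b" x v] by auto
    then have "{v. representation c x v \<noteq> 0} = {}"
      by simp
    with sum_nonzero_representation_eq[OF c(3) xc] show "x = 0"
      by simp
  qed
  moreover have "{u + w | u w. u \<in> U \<and> w \<in> span (c - b)} = A"
    using span_Un[of b "c - b"] c(1) span_b span_c by (simp add: Un_absorb1)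
  moreover have "span (c - b) \<subseteq> A"
    using span_mono[of "c - b" c] span_c by blast
  ultimately show ?thesis
    by (intro that[of "span (c - b)"] subspace_span) (auto simp: subspace_0[OF U(1)] span_zero)
qed

lemma linear_on_zero: "0 \<in> S \<Longrightarrow> linear_on S f \<Longrightarrow> f 0 = 0"
  unfolding linear_on_def by (metis scale_zero_left)

lemma semisimple_rep_zero:
  fixes A :: "'w::real_vector set"
  assumes "subspace A"
  shows "semisimple_rep A (\<lambda>(_::'v) _. 0)"
  unfolding semisimple_rep_def
proof (intro allI impI)
  fix U assume "invariant_subspace A (\<lambda>(_::'v) _. 0) U"
  then have "subspace U" "U \<subseteq> A"
    by (simp_all add: invariant_subspace_def)
  then obtain W where W: "subspace W" "W \<subseteq> A" "U \<inter> W = {0}"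
    "{u + w | u w. u \<in> U \<and> w \<in> W} = A"
    by (rule subspace_complement_exists[OF assms])
  then have "invariant_subspace A (\<lambda>(_::'v) _. 0) W"
    by (simp add: invariant_subspace_def subspace_0)
  with W show "\<exists>W. invariant_subspace A (\<lambda>(_::'v) _. 0) W \<and> U \<inter> W = {0}
      \<and> {u + w | u w. u \<in> U \<and> w \<in> W} = A"
    by blast
qed

lemma nondeg_sym_form_zero:
  assumes "nondeg_sym_form A B" "0 \<in> A" "u \<in> A"
  shows "B u 0 = 0" "B 0 u = 0"
proof -
  show "B u 0 = 0"
    using assms linear_on_zero[of A "B u"] by (simp add: nondeg_sym_form_def)
  then show "B 0 u = 0"
    using assms by (simp add: nondeg_sym_form_def)
qed

lemma orthogonal_module_zero:
  assumes "fin_dim_subspace A" "nondeg_sym_form A B"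
  shows "orthogonal_module br A (\<lambda>_ _. 0) B"
proof -
  have "0 \<in> A"
    using assms(1) by (simp add: fin_dim_subspace_def subspace_0)
  then show ?thesis
    using assms nondeg_sym_form_zero[OF assms(2)]
    unfolding orthogonal_module_def is_rep_def linear_on_def by (simp add: linear_zero)
qed

lemma invariants_zero [simp]: "invariants A (\<lambda>_ _. 0) = A"
  by (simp add: invariants_def)

lemma qact_zero:
  assumes module: "orthogonal_module br A \<rho> B" and cocycle: "(\<alpha>, \<gamma>) \<in> Z2Q br A \<rho> B"
  shows "qact br \<rho> B (\<alpha>, \<gamma>) (\<lambda>_. 0, \<lambda>_ _. 0) = (\<alpha>, \<gamma>)"
proof -
  have A0: "0 \<in> A"
    using module by (simp add: orthogonal_module_def fin_dim_subspace_def subspace_0)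
  have "\<rho> x 0 = 0" for x
    using module linear_on_zero[OF A0, of "\<rho> x"] by (simp add: orthogonal_module_def is_rep_def)
  moreover have "B (\<alpha> x y) 0 = 0" for x y
    using module cocycle nondeg_sym_form_zero[OF _ A0]
    by (simp add: orthogonal_module_def Z2Q_def C2_def)
  ultimately show ?thesis
    by (simp add: qact_def d1_def d2s_def wedge21_def)
qed

lemma admissible_lieI:
  fixes br :: "'v::real_vector \<Rightarrow> 'v \<Rightarrow> 'v" and A :: "(nat \<Rightarrow> real) set"
  assumes module: "orthogonal_module br A \<rho> B" "semisimple_rep A \<rho>"
    and cocycle: "(\<alpha>, \<gamma>) \<in> Z2Q br A \<rho> B" "\<forall>x y. \<alpha> x y \<in> invariants A \<rho>"
    and conds: "\<forall>k \<le> nil_m br. cond_A br A \<rho> B \<alpha> \<gamma> k \<and> cond_B br B \<alpha> k"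
  shows "admissible_lie br"
proof -
  let ?c = "qact br \<rho> B (\<alpha>, \<gamma>) ` (C1 A \<times> C2s)"
  have "subspace A"
    using module by (simp add: orthogonal_module_def fin_dim_subspace_def)
  then have "(\<lambda>_. 0, \<lambda>_ _. 0) \<in> C1 A \<times> C2s"
    by (simp add: C1_def C2s_def bilinear_map_def linear_zero subspace_0)
  then have "(\<alpha>, \<gamma>) \<in> ?c"
    using qact_zero[OF module(1) cocycle(1)] by (metis image_eqI)
  then have "admissible_class br A \<rho> B ?c"
    unfolding admissible_class_def using cocycle(2) conds by blast
  moreover have "?c \<in> H2Q br A \<rho> B"
    unfolding H2Q_def using cocycle(1) by blast
  ultimately show ?thesis
    unfolding admissible_lie_def using module by blast
qed

lemma zero_in_lcs: "0 \<in> lcs br k"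
  by (induction br k rule: lcs.induct) (simp_all add: span_zero)

lemma bracket_in_lcs: "k \<le> 1 \<Longrightarrow> br x y \<in> lcs br (Suc k)"
  by (cases k) (auto intro: span_base)

lemma lcs_eq_zero_if_two_step:
  assumes V: "subspace V" "\<And>x y. br x y \<in> V" "\<And>x v. v \<in> V \<Longrightarrow> br x v = 0" and k: "2 \<le> k"
  shows "lcs br (Suc k) = {0}"
proof -
  obtain n where n: "k = Suc (Suc n)"
    using k by (metis add_2_eq_Suc le_Suc_ex)
  have "lcs br (Suc (Suc n)) \<subseteq> V"
    using V(2) by (cases n) (auto intro!: span_minimal[OF _ V(1)])
  then have "{br x y | x y. y \<in> lcs br (Suc (Suc n))} \<subseteq> {0}"
    using V(3) by blast
  then have "lcs br (Suc k) \<subseteq> span {0}"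
    unfolding n by (simp only: lcs.simps) (rule span_mono)
  then show ?thesis
    using zero_in_lcs[of br "Suc k"] by auto
qed

lemma zero_in_C2s: "(\<lambda>_ _. 0) \<in> C2s"
  by (simp add: C2s_def bilinear_map_def linear_zero)

lemma C2s_add: "\<omega> \<in> C2s \<Longrightarrow> \<omega>' \<in> C2s \<Longrightarrow> (\<lambda>x y. \<omega> x y + \<omega>' x y) \<in> C2s"
  by (simp add: C2s_def bilinear_map_def linear_compose_add)

lemma zero_in_C3s: "(\<lambda>_ _ _. 0) \<in> C3s"
  by (simp add: C3s_def trilinear_map_def linear_zero)

lemma alpha_ker_image_subset:
  "subspace S \<Longrightarrow> (\<And>x y. \<alpha> x y \<in> S) \<Longrightarrow> alpha_ker_image br \<alpha> k \<subseteq> S"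
  unfolding alpha_ker_image_def by (auto intro!: subspace_sum)

lemma cond_B_if_anisotropic:
  assumes "subspace S" "\<And>x y. \<alpha> x y \<in> S" "\<And>u. u \<in> S \<Longrightarrow> B u u = 0 \<Longrightarrow> u = 0"
  shows "cond_B br B \<alpha> k"
  using alpha_ker_image_subset[of S \<alpha> br k] assms
  unfolding cond_B_def nondegenerate_sub_def by blast

lemma cond_B_if_lcs_zero:
  assumes "lcs br (Suc k) = {0}" "\<And>x. \<alpha> x 0 = 0"
  shows "cond_B br B \<alpha> k"
  using assms unfolding cond_B_def nondegenerate_sub_def alpha_ker_image_def by auto

lemma elementary_tensor_in_alpha_ker_image:
  assumes "y \<in> lcs br (Suc k)" "br x y = 0"
  shows "\<alpha> x y \<in> alpha_ker_image br \<alpha> k"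
  unfolding alpha_ker_image_def
  by (rule CollectI, rule exI[of _ 1], rule exI[of _ "\<lambda>_. x"], rule exI[of _ "\<lambda>_. y"])
    (simp add: assms)

lemma cond_A_if_central_radical_trivial:
  assumes "\<And>L0. L0 \<in> centre br \<Longrightarrow> \<forall>L. \<alpha> L L0 = 0 \<Longrightarrow> L0 = 0"
  shows "cond_A br A \<rho> B \<alpha> \<gamma> k"
  using assms unfolding cond_A_def lk_def by (auto split: if_splits)

lemma cond_A_if_lcs_zero:
  assumes "0 < k" "lcs br (Suc k) = {0}"
  shows "cond_A br A \<rho> B \<alpha> \<gamma> k"
  using assms unfolding cond_A_def lk_def by auto

text \<open>Putting \<open>L = Lt\<close> and \<open>X = Zv\<close> into the identity of \<open>(A\<^sub>k)\<close> kills its right-hand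
  side, so \<open>\<gamma>(Lt, L0, Zv) = 0\<close>.\<close>

lemma cond_A_by_test_vectors:
  assumes Zv: "Zv \<in> lcs br (Suc k)" and "\<alpha> Lt Zv = 0" "br Lt Zv = 0" "\<forall>u\<in>A. B u 0 = 0"
    and radical: "\<And>L0. L0 \<in> centre br \<Longrightarrow> \<forall>L. \<alpha> L L0 = 0 \<Longrightarrow> \<gamma> Lt L0 Zv = 0 \<Longrightarrow> L0 = 0"
  shows "cond_A br A \<rho> B \<alpha> \<gamma> k"
  unfolding cond_A_def
proof (intro ballI impI)
  fix L0 assume L0: "L0 \<in> lk br A \<rho> k"
    and "\<exists>A0\<in>A. \<exists>Z0. linear_on (lcs br (Suc k)) Z0 \<and>
      (\<forall>L. \<alpha> L L0 = 0 \<and> (\<forall>X\<in>lcs br (Suc k). \<gamma> L L0 X = - B A0 (\<alpha> L X) + Z0 (br L X)))"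
  then obtain A0 Z0 where "A0 \<in> A" "linear_on (lcs br (Suc k)) Z0"
    and "\<forall>L. \<alpha> L L0 = 0" and "\<gamma> Lt L0 Zv = - B A0 (\<alpha> Lt Zv) + Z0 (br Lt Zv)"
    using Zv by blast
  moreover have "Z0 0 = 0"
    using linear_on_zero[OF zero_in_lcs] \<open>linear_on (lcs br (Suc k)) Z0\<close> .
  ultimately have "\<gamma> Lt L0 Zv = 0"
    using assms by simp
  moreover have "L0 \<in> centre br"
    using L0 by (simp add: lk_def split: if_splits)
  ultimately show "L0 = 0"
    using radical \<open>\<forall>L. \<alpha> L L0 = 0\<close> by blast
qed

lemma cond_A_two_step_by_test_vectors:
  assumes "\<And>k. 2 \<le> k \<Longrightarrow> lcs br (Suc k) = {0}"
    and "\<alpha> Lt (br X X') = 0" "br Lt (br X X') = 0" "\<forall>u\<in>A. B u 0 = 0"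
    and "\<And>L0. L0 \<in> centre br \<Longrightarrow> \<forall>L. \<alpha> L L0 = 0 \<Longrightarrow> \<gamma> Lt L0 (br X X') = 0 \<Longrightarrow> L0 = 0"
  shows "cond_A br A \<rho> B \<alpha> \<gamma> k"
proof (cases "k \<le> 1")
  case True
  then have "br X X' \<in> lcs br (Suc k)"
    by (rule bracket_in_lcs)
  then show ?thesis
    using assms(2-5) by (rule cond_A_by_test_vectors)
next
  case False
  then show ?thesis
    using assms(1) by (intro cond_A_if_lcs_zero) simp_all
qed

text \<open>The plane of signature (1,1), realised as the functions \<open>nat \<Rightarrow> real\<close> supported in \<open>{0, 1}\<close>.\<close>

definition plane_vec :: "real \<Rightarrow> real \<Rightarrow> nat \<Rightarrow> real" where
  "plane_vec p q = (\<lambda>i. if i = 0 then p else if i = 1 then q else 0)"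

definition lorentz_plane :: "(nat \<Rightarrow> real) set" where
  "lorentz_plane = {u. \<forall>i\<ge>2. u i = 0}"

definition lorentz_form :: "(nat \<Rightarrow> real) \<Rightarrow> (nat \<Rightarrow> real) \<Rightarrow> real" where
  "lorentz_form u v = u 0 * v 0 - u 1 * v 1"

lemma plane_vec_apply [simp]: "plane_vec p q 0 = p" "plane_vec p q (Suc 0) = q"
  by (simp_all add: plane_vec_def)

lemma plane_vec_eq_0_iff [simp]: "plane_vec p q = 0 \<longleftrightarrow> p = 0 \<and> q = 0"
  by (auto simp: plane_vec_def fun_eq_iff)

lemma plane_vec_add: "plane_vec p q + plane_vec p' q' = plane_vec (p + p') (q + q')"
  by (simp add: plane_vec_def fun_eq_iff)

lemma plane_vec_scaleR: "c *\<^sub>R plane_vec p q = plane_vec (c * p) (c * q)"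
  by (simp add: plane_vec_def fun_eq_iff scaleR_fun_def)

lemma plane_vec_in_lorentz_plane [simp]: "plane_vec p q \<in> lorentz_plane"
  by (simp add: plane_vec_def lorentz_plane_def)

lemma lorentz_plane_eq_plane_vec: "u \<in> lorentz_plane \<Longrightarrow> u = plane_vec (u 0) (u 1)"
  by (auto simp: lorentz_plane_def plane_vec_def fun_eq_iff)

lemma lorentz_form_plane_vec [simp]:
  "lorentz_form (plane_vec p q) (plane_vec p' q') = p * p' - q * q'"
  by (simp add: lorentz_form_def)

lemma subspace_lorentz_plane: "subspace lorentz_plane"
  by (simp add: subspace_def lorentz_plane_def scaleR_fun_def)

lemma fin_dim_lorentz_plane: "fin_dim_subspace lorentz_plane"
proof -
  let ?S = "{plane_vec 1 0, plane_vec 0 1}"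
  have "span ?S \<subseteq> lorentz_plane"
    by (rule span_minimal) (simp_all add: subspace_lorentz_plane)
  moreover have "u \<in> span ?S" if "u \<in> lorentz_plane" for u
  proof -
    have "u = plane_vec (u 0) (u 1)"
      using lorentz_plane_eq_plane_vec[OF that] .
    also have "\<dots> = u 0 *\<^sub>R plane_vec 1 0 + u 1 *\<^sub>R plane_vec 0 1"
      by (simp add: plane_vec_scaleR plane_vec_add)
    also have "\<dots> \<in> span ?S"
      by (intro span_add span_scale span_base) simp_all
    finally show ?thesis .
  qed
  ultimately have "lorentz_plane = span ?S"
    by blast
  then show ?thesis
    unfolding fin_dim_subspace_def
    by (intro conjI subspace_lorentz_plane exI[of _ ?S]) simp_all
qed

lemma nondeg_sym_form_lorentz_form: "nondeg_sym_form lorentz_plane lorentz_form"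
  unfolding nondeg_sym_form_def
proof (intro conjI ballI impI)
  show "linear_on lorentz_plane (lorentz_form u)" for u
    by (simp add: linear_on_def lorentz_form_def scaleR_fun_def algebra_simps)
  show "lorentz_form u v = lorentz_form v u" for u v
    by (simp add: lorentz_form_def)
  fix u assume u: "u \<in> lorentz_plane" and "\<forall>v\<in>lorentz_plane. lorentz_form u v = 0"
  then have "lorentz_form u (plane_vec 1 0) = 0" "lorentz_form u (plane_vec 0 1) = 0"
    by simp_all
  then have "u 0 = 0" "u 1 = 0"
    by (simp_all add: lorentz_form_def)
  then show "u = 0"
    using lorentz_plane_eq_plane_vec[OF u] by (metis plane_vec_eq_0_iff)
qed

lemma nondegenerate_sub_lorentz_form:
  assumes "T \<subseteq> lorentz_plane" "plane_vec 1 0 \<in> T" "plane_vec 0 1 \<in> T"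
  shows "nondegenerate_sub lorentz_form T"
  unfolding nondegenerate_sub_def
proof (intro ballI impI)
  fix u assume "u \<in> T" "\<forall>v\<in>T. lorentz_form u v = 0"
  then have "u \<in> lorentz_plane" "u 0 = 0" "u 1 = 0"
    using assms by (auto simp: lorentz_form_def)
  then show "u = 0"
    using lorentz_plane_eq_plane_vec by (metis plane_vec_eq_0_iff)
qed

definition plane_cochain :: "('v \<Rightarrow> 'v \<Rightarrow> real) \<Rightarrow> ('v \<Rightarrow> 'v \<Rightarrow> real) \<Rightarrow> 'v \<Rightarrow> 'v \<Rightarrow> nat \<Rightarrow> real" where
  "plane_cochain \<omega>\<^sub>1 \<omega>\<^sub>2 = (\<lambda>x y. plane_vec (\<omega>\<^sub>1 x y) (\<omega>\<^sub>2 x y))"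

lemma cond_B_two_step_by_test_vectors:
  assumes "\<And>k. 2 \<le> k \<Longrightarrow> lcs br (Suc k) = {0}" and "\<alpha> \<in> C2 lorentz_plane"
    and "br L\<^sub>1 (br X X') = 0" "\<alpha> L\<^sub>1 (br X X') = plane_vec 1 0"
    and "br L\<^sub>2 (br X X') = 0" "\<alpha> L\<^sub>2 (br X X') = plane_vec 0 1"
  shows "cond_B br lorentz_form \<alpha> k"
proof (cases "k \<le> 1")
  case True
  have "alpha_ker_image br \<alpha> k \<subseteq> lorentz_plane"
    using assms(2) by (intro alpha_ker_image_subset subspace_lorentz_plane) (simp add: C2_def)
  moreover have "\<alpha> L (br X X') \<in> alpha_ker_image br \<alpha> k" if "br L (br X X') = 0" for L
    using that by (intro elementary_tensor_in_alpha_ker_image bracket_in_lcs[OF True])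
  then have "plane_vec 1 0 \<in> alpha_ker_image br \<alpha> k" "plane_vec 0 1 \<in> alpha_ker_image br \<alpha> k"
    using assms(3-6) by metis+
  ultimately show ?thesis
    unfolding cond_B_def by (rule nondegenerate_sub_lorentz_form)
next
  case False
  have "\<alpha> x 0 = 0" for x
    using assms(2) by (simp add: C2_def bilinear_map_def linear_0)
  with False show ?thesis
    using assms(1) by (intro cond_B_if_lcs_zero) simp_all
qed

text \<open>\<open>(\<omega> \<and> \<omega>)/2\<close>, in the shuffle convention of \<open>wedge22\<close>.\<close>

definition half_wedge_square :: "('v \<Rightarrow> 'v \<Rightarrow> real) \<Rightarrow> 'v \<Rightarrow> 'v \<Rightarrow> 'v \<Rightarrow> 'v \<Rightarrow> real" where
  "half_wedge_square \<omega> w x y z = \<omega> w x * \<omega> y z - \<omega> w y * \<omega> x z + \<omega> w z * \<omega> x y"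

lemma linear_plane_vec: "linear f \<Longrightarrow> linear g \<Longrightarrow> linear (\<lambda>x. plane_vec (f x) (g x))"
  by (rule linearI) (simp_all add: linear_add linear_scale plane_vec_add plane_vec_scaleR)

lemma plane_cochain_in_C2:
  "\<omega>\<^sub>1 \<in> C2s \<Longrightarrow> \<omega>\<^sub>2 \<in> C2s \<Longrightarrow> plane_cochain \<omega>\<^sub>1 \<omega>\<^sub>2 \<in> C2 lorentz_plane"
  by (simp add: C2s_def C2_def bilinear_map_def plane_cochain_def linear_plane_vec)

lemma d2_plane_cochain:
  "d2 br (\<lambda>_ _. 0) (plane_cochain \<omega>\<^sub>1 \<omega>\<^sub>2) x y z = plane_vec (d2s br \<omega>\<^sub>1 x y z) (d2s br \<omega>\<^sub>2 x y z)"
  by (simp add: d2_def d2s_def plane_cochain_def plane_vec_def fun_eq_iff)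

lemma wedge22_plane_cochain:
  "wedge22 lorentz_form (plane_cochain \<omega>\<^sub>1 \<omega>\<^sub>2) (plane_cochain \<omega>\<^sub>1 \<omega>\<^sub>2) w x y z
     = 2 * (half_wedge_square \<omega>\<^sub>1 w x y z - half_wedge_square \<omega>\<^sub>2 w x y z)"
  by (simp add: wedge22_def plane_cochain_def half_wedge_square_def algebra_simps)

lemma plane_cochain_in_Z2Q:
  assumes "\<omega>\<^sub>1 \<in> C2s" "\<omega>\<^sub>2 \<in> C2s" "\<gamma> \<in> C3s"
    and "\<And>x y z. d2s br \<omega>\<^sub>1 x y z = 0" "\<And>x y z. d2s br \<omega>\<^sub>2 x y z = 0"
    and "\<And>w x y z. d3s br \<gamma> w x y z = half_wedge_square \<omega>\<^sub>1 w x y z - half_wedge_square \<omega>\<^sub>2 w x y z"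
  shows "(plane_cochain \<omega>\<^sub>1 \<omega>\<^sub>2, \<gamma>) \<in> Z2Q br lorentz_plane (\<lambda>_ _. 0) lorentz_form"
  using assms by (simp add: Z2Q_def plane_cochain_in_C2 d2_plane_cochain wedge22_plane_cochain)

lemma admissible_lie_lorentz_plane:
  fixes br :: "'v::real_vector \<Rightarrow> 'v \<Rightarrow> 'v"
  assumes cocycle: "(\<alpha>, \<gamma>) \<in> Z2Q br lorentz_plane (\<lambda>_ _. 0) lorentz_form"
    and conds: "\<And>k. cond_A br lorentz_plane (\<lambda>_ _. 0) lorentz_form \<alpha> \<gamma> k"
      "\<And>k. cond_B br lorentz_form \<alpha> k"
  shows "admissible_lie br"
proof (rule admissible_lieI)
  show "orthogonal_module br lorentz_plane (\<lambda>_ _. 0) lorentz_form"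
    by (rule orthogonal_module_zero[OF fin_dim_lorentz_plane nondeg_sym_form_lorentz_form])
  show "semisimple_rep lorentz_plane (\<lambda>(_::'v) _. 0)"
    by (rule semisimple_rep_zero[OF subspace_lorentz_plane])
  show "\<forall>x y. \<alpha> x y \<in> invariants lorentz_plane (\<lambda>(_::'v) _. 0)"
    using cocycle by (simp add: Z2Q_def C2_def)
qed (use cocycle conds in blast)+

lemma cond_B_scalar_plane_cochain: "cond_B br lorentz_form (plane_cochain \<omega> (\<lambda>_ _. 0)) k"
proof (rule cond_B_if_anisotropic)
  let ?S = "{u. \<forall>i. i \<noteq> 0 \<longrightarrow> u i = 0}"
  show "subspace ?S"
    by (simp add: subspace_def scaleR_fun_def)
  show "plane_cochain \<omega> (\<lambda>_ _. 0) x y \<in> ?S" for x y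
    by (simp add: plane_cochain_def plane_vec_def)
  show "u = 0" if "u \<in> ?S" "lorentz_form u u = 0" for u
    using that by (auto simp: lorentz_form_def fun_eq_iff) (metis gr0I)
qed

lemma admissible_lie_scalar_cocycle:
  fixes br :: "'v::real_vector \<Rightarrow> 'v \<Rightarrow> 'v"
  assumes "\<omega> \<in> C2s" "\<gamma> \<in> C3s" "\<And>x y z. d2s br \<omega> x y z = 0"
    and "\<And>w x y z. d3s br \<gamma> w x y z = half_wedge_square \<omega> w x y z"
    and "\<And>k. cond_A br lorentz_plane (\<lambda>_ _. 0) lorentz_form (plane_cochain \<omega> (\<lambda>_ _. 0)) \<gamma> k"
  shows "admissible_lie br"
proof (rule admissible_lie_lorentz_plane)
  show "(plane_cochain \<omega> (\<lambda>_ _. 0), \<gamma>) \<in> Z2Q br lorentz_plane (\<lambda>_ _. 0) lorentz_form"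
    using assms by (intro plane_cochain_in_Z2Q zero_in_C2s) (simp_all add: d2s_def half_wedge_square_def)
qed (use assms cond_B_scalar_plane_cochain in blast)+

definition coord_wedge :: "'n \<Rightarrow> 'n \<Rightarrow> real^'n \<Rightarrow> real^'n \<Rightarrow> real" where
  "coord_wedge i j u v = u $ i * v $ j - u $ j * v $ i"

definition coord_wedge3 :: "'n \<Rightarrow> 'n \<Rightarrow> 'n \<Rightarrow> real^'n \<Rightarrow> real^'n \<Rightarrow> real^'n \<Rightarrow> real" where
  "coord_wedge3 i j k u v w =
     u $ i * coord_wedge j k v w - v $ i * coord_wedge j k u w + w $ i * coord_wedge j k u v"

lemma coord_wedge_in_C2s: "coord_wedge i j \<in> C2s"
  unfolding C2s_def bilinear_map_def coord_wedge_def
  by (auto intro!: linearI simp: algebra_simps)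

lemma coord_wedge3_in_C3s: "coord_wedge3 i j k \<in> C3s"
  unfolding C3s_def trilinear_map_def coord_wedge3_def coord_wedge_def
  by (auto intro!: linearI simp: algebra_simps)

lemma half_wedge_square_coord_wedge [simp]: "half_wedge_square (coord_wedge i j) w x y z = 0"
  by (simp add: half_wedge_square_def coord_wedge_def algebra_simps)

lemma struct_br_add:
  "struct_br (\<lambda>i j. c i j + d i j) u v = struct_br c u v + struct_br d u v"
  by (simp add: struct_br_def scaleR_add_right sum.distrib)

lemma struct_br_single_entry:
  "struct_br (\<lambda>i j. if j = b \<and> i = a then z else 0) u v = (u $ a * v $ b) *\<^sub>R z"
  by (simp add: struct_br_def if_distrib[of "scaleR _"] sum.delta if_if_eq_conj[symmetric]
      cong: if_cong)

lemma struct_br_skew_entry: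
  assumes "a \<noteq> b"
  shows "struct_br (skew_entry a b z) u v = coord_wedge a b u v *\<^sub>R z"
proof -
  have "skew_entry a b z = (\<lambda>i j. (if j = b \<and> i = a then z else 0) + (if j = a \<and> i = b then - z else 0))"
    using assms by (auto simp: skew_entry_def fun_eq_iff)
  then show ?thesis
    by (simp add: struct_br_add struct_br_single_entry coord_wedge_def algebra_simps)
qed

lemma e_component [simp]: "e i $ j = (if j = i then 1 else 0)"
  by (simp add: e_def axis_def)

lemma centre_bracket_component: "L0 \<in> centre br \<Longrightarrow> br x L0 $ i = 0"
  by (simp add: centre_def)

lemma exhaust_5:
  fixes x :: 5
  shows "x = 1 \<or> x = 2 \<or> x = 3 \<or> x = 4 \<or> x = 5"
proof (induct x)
  case (of_int z)
  then have "z = 0 \<or> z = 1 \<or> z = 2 \<or> z = 3 \<or> z = 4" by fastforce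
  then show ?case by auto
qed

lemma forall_5: "(\<forall>i::5. P i) \<longleftrightarrow> P 1 \<and> P 2 \<and> P 3 \<and> P 4 \<and> P 5"
  by (metis exhaust_5)

lemma exhaust_6:
  fixes x :: 6
  shows "x = 1 \<or> x = 2 \<or> x = 3 \<or> x = 4 \<or> x = 5 \<or> x = 6"
proof (induct x)
  case (of_int z)
  then have "z = 0 \<or> z = 1 \<or> z = 2 \<or> z = 3 \<or> z = 4 \<or> z = 5" by fastforce
  then show ?case by auto
qed

lemma forall_6: "(\<forall>i::6. P i) \<longleftrightarrow> P 1 \<and> P 2 \<and> P 3 \<and> P 4 \<and> P 5 \<and> P 6"
  by (metis exhaust_6)

lemma h1_br_eq: "h1_br u v = coord_wedge 1 2 u v *\<^sub>R e 3"
  by (simp add: h1_br_def struct_br_skew_entry)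

lemma g41_br_eq: "g41_br u v = coord_wedge 1 3 u v *\<^sub>R e 4 + coord_wedge 1 2 u v *\<^sub>R e 3"
  by (simp add: g41_br_def struct_br_add struct_br_skew_entry)

lemma g52_br_eq: "g52_br u v = coord_wedge 1 2 u v *\<^sub>R e 4 + coord_wedge 1 3 u v *\<^sub>R e 5"
  by (simp add: g52_br_def struct_br_add struct_br_skew_entry)

lemma g64_br_eq:
  "g64_br u v = coord_wedge 1 2 u v *\<^sub>R e 5 + coord_wedge 1 3 u v *\<^sub>R e 6 + coord_wedge 3 4 u v *\<^sub>R e 5"
  by (simp add: g64_br_def struct_br_add struct_br_skew_entry)

lemma g65_br_eq:
  "g65_br u v = coord_wedge 1 2 u v *\<^sub>R e 5 + coord_wedge 1 3 u v *\<^sub>R e 6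
     + coord_wedge 2 4 u v *\<^sub>R e 6 + coord_wedge 3 4 u v *\<^sub>R (- e 5)"
  by (simp add: g65_br_def struct_br_add struct_br_skew_entry)

lemma admissible_lie_h1: "admissible_lie h1_br"
proof (rule admissible_lie_scalar_cocycle[where \<omega> = "coord_wedge 1 3" and \<gamma> = "\<lambda>_ _ _. 0"])
  show "d2s h1_br (coord_wedge 1 3) x y z = 0" for x y z
    by (simp add: d2s_def coord_wedge_def h1_br_eq algebra_simps)
  show "cond_A h1_br lorentz_plane (\<lambda>_ _. 0) lorentz_form
      (plane_cochain (coord_wedge 1 3) (\<lambda>_ _. 0)) (\<lambda>_ _ _. 0) k" for k
  proof (rule cond_A_if_central_radical_trivial)
    fix L0 :: "real^3"
    assume "L0 \<in> centre h1_br" "\<forall>L. plane_cochain (coord_wedge 1 3) (\<lambda>_ _. 0) L L0 = 0"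
    then have "h1_br (e 1) L0 $ 3 = 0" "h1_br (e 2) L0 $ 3 = 0" "coord_wedge 1 3 (e 1) L0 = 0"
      by (simp_all add: centre_bracket_component plane_cochain_def)
    then show "L0 = 0"
      by (simp add: h1_br_eq coord_wedge_def vec_eq_iff forall_3)
  qed
qed (simp_all add: coord_wedge_in_C2s zero_in_C3s d3s_def)

lemma admissible_lie_g41: "admissible_lie g41_br"
proof (rule admissible_lie_scalar_cocycle[where \<omega> = "coord_wedge 1 4" and \<gamma> = "\<lambda>_ _ _. 0"])
  show "d2s g41_br (coord_wedge 1 4) x y z = 0" for x y z
    by (simp add: d2s_def coord_wedge_def g41_br_eq algebra_simps)
  show "cond_A g41_br lorentz_plane (\<lambda>_ _. 0) lorentz_form
      (plane_cochain (coord_wedge 1 4) (\<lambda>_ _. 0)) (\<lambda>_ _ _. 0) k" for k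
  proof (rule cond_A_if_central_radical_trivial)
    fix L0 :: "real^4"
    assume "L0 \<in> centre g41_br" "\<forall>L. plane_cochain (coord_wedge 1 4) (\<lambda>_ _. 0) L L0 = 0"
    then have "g41_br (e 1) L0 $ 4 = 0" "g41_br (e 1) L0 $ 3 = 0" "g41_br (e 2) L0 $ 3 = 0"
        "coord_wedge 1 4 (e 1) L0 = 0"
      by (simp_all add: centre_bracket_component plane_cochain_def)
    then show "L0 = 0"
      by (simp add: g41_br_eq coord_wedge_def vec_eq_iff forall_4)
  qed
qed (simp_all add: coord_wedge_in_C2s zero_in_C3s d3s_def)

lemma lcs_g52_eq_zero: "2 \<le> k \<Longrightarrow> lcs g52_br (Suc k) = {0}"
  by (rule lcs_eq_zero_if_two_step[where V = "{v. v $ 1 = 0 \<and> v $ 2 = 0 \<and> v $ 3 = 0}"])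
    (simp_all add: subspace_def g52_br_eq coord_wedge_def)

lemma admissible_lie_g52: "admissible_lie g52_br"
proof (rule admissible_lie_scalar_cocycle[where \<omega> = "coord_wedge 3 5" and \<gamma> = "coord_wedge3 1 4 5"])
  show "d2s g52_br (coord_wedge 3 5) x y z = 0" for x y z
    by (simp add: d2s_def coord_wedge_def g52_br_eq algebra_simps)
  show "d3s g52_br (coord_wedge3 1 4 5) w x y z = half_wedge_square (coord_wedge 3 5) w x y z" for w x y z
    by (simp add: d3s_def half_wedge_square_def coord_wedge3_def coord_wedge_def g52_br_eq algebra_simps)
  show "cond_A g52_br lorentz_plane (\<lambda>_ _. 0) lorentz_form
      (plane_cochain (coord_wedge 3 5) (\<lambda>_ _. 0)) (coord_wedge3 1 4 5) k" for k
  proof (rule cond_A_two_step_by_test_vectors[where Lt = "e 1" and X = "e 1" and X' = "e 3"])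
    fix L0 :: "real^5"
    assume "L0 \<in> centre g52_br" "\<forall>L. plane_cochain (coord_wedge 3 5) (\<lambda>_ _. 0) L L0 = 0"
      and "coord_wedge3 1 4 5 (e 1) L0 (g52_br (e 1) (e 3)) = 0"
    moreover from calculation have "g52_br (e 1) L0 $ 4 = 0" "g52_br (e 1) L0 $ 5 = 0"
        "g52_br (e 2) L0 $ 4 = 0" "coord_wedge 3 5 (e 3) L0 = 0"
      by (simp_all add: centre_bracket_component plane_cochain_def)
    ultimately show "L0 = 0"
      by (simp add: g52_br_eq coord_wedge3_def coord_wedge_def vec_eq_iff forall_5)
  qed (simp_all add: lcs_g52_eq_zero plane_cochain_def coord_wedge_def g52_br_eq lorentz_form_def)
qed (simp_all add: coord_wedge_in_C2s coord_wedge3_in_C3s)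

lemma lcs_g64_eq_zero: "2 \<le> k \<Longrightarrow> lcs g64_br (Suc k) = {0}"
  by (rule lcs_eq_zero_if_two_step[where V = "{v. v $ 1 = 0 \<and> v $ 2 = 0 \<and> v $ 3 = 0 \<and> v $ 4 = 0}"])
    (simp_all add: subspace_def g64_br_eq coord_wedge_def)

lemma admissible_lie_g64: "admissible_lie g64_br"
proof (rule admissible_lie_scalar_cocycle[where \<omega> = "\<lambda>x y. coord_wedge 1 6 x y + coord_wedge 2 3 x y"
      and \<gamma> = "coord_wedge3 3 5 6"])
  let ?\<omega> = "\<lambda>x y. coord_wedge 1 6 x y + coord_wedge 2 3 x y"
  show "?\<omega> \<in> C2s"
    by (intro C2s_add coord_wedge_in_C2s)
  show "d2s g64_br ?\<omega> x y z = 0" for x y z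
    by (simp add: d2s_def coord_wedge_def g64_br_eq algebra_simps)
  show "d3s g64_br (coord_wedge3 3 5 6) w x y z = half_wedge_square ?\<omega> w x y z" for w x y z
    by (simp add: d3s_def half_wedge_square_def coord_wedge3_def coord_wedge_def g64_br_eq algebra_simps)
  show "cond_A g64_br lorentz_plane (\<lambda>_ _. 0) lorentz_form
      (plane_cochain ?\<omega> (\<lambda>_ _. 0)) (coord_wedge3 3 5 6) k" for k
  proof (rule cond_A_two_step_by_test_vectors[where Lt = "e 3" and X = "e 1" and X' = "e 3"])
    fix L0 :: "real^6"
    assume "L0 \<in> centre g64_br" "\<forall>L. plane_cochain ?\<omega> (\<lambda>_ _. 0) L L0 = 0"
      and "coord_wedge3 3 5 6 (e 3) L0 (g64_br (e 1) (e 3)) = 0"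
    moreover from calculation have "g64_br (e 1) L0 $ 5 = 0" "g64_br (e 1) L0 $ 6 = 0"
        "g64_br (e 3) L0 $ 5 = 0" "g64_br (e 3) L0 $ 6 = 0" "?\<omega> (e 1) L0 = 0"
      by (simp_all add: centre_bracket_component plane_cochain_def)
    ultimately show "L0 = 0"
      by (simp add: g64_br_eq coord_wedge3_def coord_wedge_def vec_eq_iff forall_6)
  qed (simp_all add: lcs_g64_eq_zero plane_cochain_def coord_wedge_def g64_br_eq lorentz_form_def)
qed (simp add: coord_wedge3_in_C3s)

lemma lcs_g65_eq_zero: "2 \<le> k \<Longrightarrow> lcs g65_br (Suc k) = {0}"
  by (rule lcs_eq_zero_if_two_step[where V = "{v. v $ 1 = 0 \<and> v $ 2 = 0 \<and> v $ 3 = 0 \<and> v $ 4 = 0}"])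
    (simp_all add: subspace_def g65_br_eq coord_wedge_def)

lemma admissible_lie_g65: "admissible_lie g65_br"
proof -
  let ?\<omega>\<^sub>1 = "\<lambda>x y :: real^6. coord_wedge 5 4 x y + coord_wedge 1 6 x y"
  let ?\<omega>\<^sub>2 = "\<lambda>x y :: real^6. coord_wedge 1 5 x y + coord_wedge 4 6 x y"
  let ?\<alpha> = "plane_cochain ?\<omega>\<^sub>1 ?\<omega>\<^sub>2"
  have C2s: "?\<omega>\<^sub>1 \<in> C2s" "?\<omega>\<^sub>2 \<in> C2s"
    by (intro C2s_add coord_wedge_in_C2s)+
  have "(?\<alpha>, \<lambda>_ _ _. 0) \<in> Z2Q g65_br lorentz_plane (\<lambda>_ _. 0) lorentz_form"
    by (rule plane_cochain_in_Z2Q[OF C2s zero_in_C3s])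
      (simp_all add: d2s_def d3s_def half_wedge_square_def coord_wedge_def g65_br_eq algebra_simps)
  moreover have "cond_A g65_br lorentz_plane (\<lambda>_ _. 0) lorentz_form ?\<alpha> (\<lambda>_ _ _. 0) k" for k
  proof (rule cond_A_if_central_radical_trivial)
    fix L0 :: "real^6"
    assume "L0 \<in> centre g65_br" "\<forall>L. ?\<alpha> L L0 = 0"
    then have "g65_br (e 1) L0 $ 5 = 0" "g65_br (e 1) L0 $ 6 = 0" "g65_br (e 2) L0 $ 5 = 0"
        "g65_br (e 2) L0 $ 6 = 0" "?\<omega>\<^sub>1 (e 1) L0 = 0" "?\<omega>\<^sub>2 (e 1) L0 = 0"
      by (simp_all add: centre_bracket_component plane_cochain_def)
    then show "L0 = 0"
      by (simp add: g65_br_eq coord_wedge_def vec_eq_iff forall_6)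
  qed
  moreover have "cond_B g65_br lorentz_form ?\<alpha> k" for k
  proof (rule cond_B_two_step_by_test_vectors[where X = "e 1" and X' = "e 3" and L\<^sub>1 = "e 1" and L\<^sub>2 = "e 4"])
    show "?\<alpha> \<in> C2 lorentz_plane"
      by (rule plane_cochain_in_C2[OF C2s])
  qed (simp_all add: lcs_g65_eq_zero plane_cochain_def coord_wedge_def g65_br_eq)
  ultimately show ?thesis
    by (rule admissible_lie_lorentz_plane)
qed

theorem proposition1:
  shows "admissible_lie h1_br \<and> admissible_lie g41_br \<and> admissible_lie g52_br
       \<and> admissible_lie g64_br \<and> admissible_lie g65_br"
  using admissible_lie_h1 admissible_lie_g41 admissible_lie_g52 admissible_lie_g64 admissible_lie_g65 by blast

end
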